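(* Let $C$ be a $d$-variate copula satisfying: (i) for every $j\in\{1,\dots,d\}$, $\dot C_j(\mathbf u)=\partial C(\mathbf u)/\partial u_j$ exists and is continuous on $V_j=\{\mathbf u\in[0,1]^d:u_j\in(0,1)\}$; (ii) for all $j_1,j_2\in\{1,\dots,d\}$, $\ddot C_{j_1j_2}(\mathbf u)=\partial^2C(\mathbf u)/\partial u_{j_1}\partial u_{j_2}$ exists and is continuous on $V_{j_1}\cap V_{j_2}$, and there is $K>0$ with $|\ddot C_{j_1j_2}(\mathbf u)|\le K\min\{1/(u_{j_1}(1-u_{j_1})),1/(u_{j_2}(1-u_{j_2}))\}$ for all $\mathbf u\in V_{j_1}\cap V_{j_2}$. Then $$\sup_{\mathbf u\in[0,1]^d}\Big|\int_{[0,1]^d}\{C(\mathbf w)-C(\mathbf u)\}\,\mathrm d\mu_{n,\mathbf u}(\mathbf w)\Big|=\mathrm O(n^{-1}\log n),\qquad n\to\infty.$$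
   Context: For $\mathbf u\in[0,1]^d$ and integer $n\ge1$, $\mu_{n,\mathbf u}$ is the law of $(S_1/n,\dots,S_d/n)$, where $S_1,\dots,S_d$ are independent and $S_j\sim\mathrm{Bin}(n,u_j)$. *)

theory Defs
  imports "HOL-Analysis.Analysis" "HOL-Probability.Probability" "HOL-Library.Landau_Symbols"
begin

text \<open>Points of [0,1]^d are vectors of type real^'d, with 'd a finite index type (d = CARD('d)).\<close>

definition unit_cube :: "(real^'d) set" where
  "unit_cube = {u. \<forall>i. 0 \<le> u$i \<and> u$i \<le> 1}"

definition vupd :: "real^'d \<Rightarrow> 'd \<Rightarrow> real \<Rightarrow> real^'d" where
  "vupd u j t = (\<chi> i. if i = j then t else u$i)"

definition C_volume :: "(real^'d \<Rightarrow> real) \<Rightarrow> real^'d \<Rightarrow> real^'d \<Rightarrow> real" where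
  "C_volume C a b = (\<Sum>S\<in>Pow (UNIV::'d set).
      (-1) ^ card (UNIV - S) * C (\<chi> i. if i \<in> S then b$i else a$i))"

definition copula :: "(real^'d \<Rightarrow> real) \<Rightarrow> bool" where
  "copula C \<longleftrightarrow>
     (\<forall>u\<in>unit_cube. 0 \<le> C u \<and> C u \<le> 1) \<and>
     (\<forall>u\<in>unit_cube. (\<exists>i. u$i = 0) \<longrightarrow> C u = 0) \<and>
     (\<forall>u\<in>unit_cube. \<forall>j. (\<forall>i. i \<noteq> j \<longrightarrow> u$i = 1) \<longrightarrow> C u = u$j) \<and>
     (\<forall>a\<in>unit_cube. \<forall>b\<in>unit_cube. (\<forall>i. a$i \<le> b$i) \<longrightarrow> C_volume C a b \<ge> 0)"

definition V :: "'d \<Rightarrow> (real^'d) set" where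
  "V j = {u \<in> unit_cube. 0 < u$j \<and> u$j < 1}"

definition partial :: "'d \<Rightarrow> (real^'d \<Rightarrow> real) \<Rightarrow> real^'d \<Rightarrow> real" where
  "partial j f u = deriv (\<lambda>t. f (vupd u j t)) (u$j)"

definition partial_exists :: "'d \<Rightarrow> (real^'d \<Rightarrow> real) \<Rightarrow> real^'d \<Rightarrow> bool" where
  "partial_exists j f u \<longleftrightarrow> (\<lambda>t. f (vupd u j t)) differentiable (at (u$j))"

text \<open>mu_{n,u}: law of (S_1/n,...,S_d/n), S_j ~ Bin(n,u_j) independent.\<close>
definition bin_vec_pmf :: "nat \<Rightarrow> real^'d \<Rightarrow> ('d::finite \<Rightarrow> nat) pmf" where
  "bin_vec_pmf n u = Pi_pmf UNIV 0 (\<lambda>j. binomial_pmf n (u$j))"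

definition bernstein_err :: "(real^'d::finite \<Rightarrow> real) \<Rightarrow> nat \<Rightarrow> real^'d \<Rightarrow> real" where
  "bernstein_err C n u = measure_pmf.expectation (bin_vec_pmf n u)
      (\<lambda>k. C (\<chi> j. real (k j) / real n) - C u)"

end

theory Submission
  imports Defs "HOL-Real_Asymp.Real_Asymp"
begin

text \<open>
  Replacing the coordinates of \<open>u\<close> by \<open>S\<^sub>j/n\<close> one at a time, and conditioning on the
  coordinates already replaced, telescopes the error into \<open>d\<close> one-dimensional Bernstein errors
  of sections \<open>g(t) = C(z\<^sub>1,\<dots>,t,\<dots>,z\<^sub>d)\<close>. Such a section is 1-Lipschitz (C is a copula)
  and \<open>|g''(t)| \<le> K/(t(1-t))\<close>. Taylor's formula gives
  \<open>|g w - g u - g' u (w - u)| \<le> (2K+4) (w-u)\<^sup>2 / (u(1-u))\<close>: if \<open>u/2 \<le> w \<le> (1+u)/2\<close> every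
  intermediate point \<open>t\<close> has \<open>t(1-t) \<ge> u(1-u)/4\<close>, and otherwise \<open>|w - u| \<ge> u(1-u)/2\<close>, so the
  Lipschitz bound suffices. In expectation the linear term vanishes and the variance
  \<open>u(1-u)/n\<close> cancels the denominator. Hence the error is at most \<open>d(2K+4)/n\<close>: the bound is
  even \<open>O(1/n)\<close>, and only the diagonal second derivatives, without continuity, are used.
\<close>

subsection \<open>Moments of the binomial distribution\<close>

lemma expectation_binomial_times_index:
  fixes f :: "nat \<Rightarrow> real"
  assumes p: "p \<in> {0..1}"
  shows "measure_pmf.expectation (binomial_pmf (Suc m) p) (\<lambda>k. real k * f k) =
         real (Suc m) * p * measure_pmf.expectation (binomial_pmf m p) (\<lambda>k. f (Suc k))"
proof -
  have choose: "real (Suc m choose Suc k) * real (Suc k) = real (Suc m) * real (m choose k)" for k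
    using Suc_times_binomial[of k m] by (metis of_nat_mult mult.commute)
  have "measure_pmf.expectation (binomial_pmf (Suc m) p) (\<lambda>k. real k * f k) =
        (\<Sum>k\<le>m. (real (Suc m choose Suc k) * real (Suc k)) * (p * (p ^ k * (1 - p) ^ (m - k) * f (Suc k))))"
    by (simp only: expectation_binomial_pmf'[OF p] sum.atMost_Suc_shift)
       (simp del: binomial_Suc_Suc add: mult_ac)
  also have "\<dots> = real (Suc m) * p * (\<Sum>k\<le>m. real (m choose k) * p ^ k * (1 - p) ^ (m - k) * f (Suc k))"
    unfolding choose by (simp add: sum_distrib_left mult_ac)
  also have "\<dots> = real (Suc m) * p * measure_pmf.expectation (binomial_pmf m p) (\<lambda>k. f (Suc k))"
    by (simp add: expectation_binomial_pmf'[OF p])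
  finally show ?thesis .
qed

lemma expectation_binomial_pmf_real:
  assumes p: "p \<in> {0..1}"
  shows "measure_pmf.expectation (binomial_pmf n p) real = real n * p"
proof (cases n)
  case (Suc m)
  show ?thesis
    using expectation_binomial_times_index[OF p, of m "\<lambda>_. 1"] Suc by simp
qed (simp add: binomial_pmf_0[OF p])

lemma expectation_binomial_pmf_falling:
  assumes p: "p \<in> {0..1}"
  shows "measure_pmf.expectation (binomial_pmf n p) (\<lambda>k. real k * (real k - 1)) = real n * (real n - 1) * p\<^sup>2"
proof (cases n)
  case (Suc m)
  show ?thesis
    using expectation_binomial_times_index[OF p, of m "\<lambda>k. real k - 1"] Suc
          expectation_binomial_pmf_real[OF p, of m]
    by (simp add: power2_eq_square mult_ac)
qed (simp add: binomial_pmf_0[OF p])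

lemma expectation_binomial_pmf_sq_dev:
  assumes p: "p \<in> {0..1}" and n: "n > 0"
  shows "measure_pmf.expectation (binomial_pmf n p) (\<lambda>k. (real k / real n - p)\<^sup>2) = p * (1 - p) / real n"
proof -
  have "(\<lambda>k. (real k / real n - p)\<^sup>2) =
        (\<lambda>k. (real k * (real k - 1) + (1 - 2 * real n * p) * real k + (real n * p)\<^sup>2) / (real n)\<^sup>2)"
    using n by (auto simp: fun_eq_iff field_simps power2_eq_square)
  then have "measure_pmf.expectation (binomial_pmf n p) (\<lambda>k. (real k / real n - p)\<^sup>2) =
        (measure_pmf.expectation (binomial_pmf n p) (\<lambda>k. real k * (real k - 1))
         + (1 - 2 * real n * p) * measure_pmf.expectation (binomial_pmf n p) real + (real n * p)\<^sup>2) / (real n)\<^sup>2"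
    using p by (simp add: integral_add integral_mult_right)
  also have "\<dots> = (real n * (real n - 1) * p\<^sup>2 + (1 - 2 * real n * p) * (real n * p)
         + (real n * p)\<^sup>2) / (real n)\<^sup>2"
    by (simp only: expectation_binomial_pmf_falling[OF p] expectation_binomial_pmf_real[OF p])
  also have "\<dots> = p * (1 - p) / real n"
    using n by (simp add: field_simps power2_eq_square)
  finally show ?thesis .
qed

subsection \<open>Bernstein error of a one-dimensional function\<close>

lemma lipschitz_deriv_abs_le:
  fixes g :: "real \<Rightarrow> real"
  assumes lip: "L-lipschitz_on S g" and S: "open S" "u \<in> S" and D: "DERIV g u :> D"
  shows "\<bar>D\<bar> \<le> L"
proof -
  have lim: "((\<lambda>h. \<bar>(g (u + h) - g u) / h\<bar>) \<longlongrightarrow> \<bar>D\<bar>) (at 0)"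
    using D unfolding DERIV_def by (intro tendsto_rabs)
  obtain e where e: "e > 0" "ball u e \<subseteq> S"
    using S openE by blast
  have "eventually (\<lambda>h. \<bar>(g (u + h) - g u) / h\<bar> \<le> L) (at (0::real))"
    unfolding eventually_at
  proof (intro exI[of _ e] conjI ballI impI)
    fix h :: real assume h: "h \<noteq> 0 \<and> dist h 0 < e"
    then have uh: "u + h \<in> S" using e by (auto simp: dist_real_def)
    have "\<bar>g (u + h) - g u\<bar> \<le> L * \<bar>h\<bar>"
      using lipschitz_onD[OF lip uh S(2)] by (simp add: dist_real_def)
    then show "\<bar>(g (u + h) - g u) / h\<bar> \<le> L" using h by (simp add: abs_divide divide_le_eq)
  qed (use e in auto)
  then show ?thesis by (rule tendsto_upperbound[OF lim]) simp
qed

lemma taylor_remainder_far: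
  fixes g :: "real \<Rightarrow> real"
  assumes lip: "1-lipschitz_on {0..1} g" and g1u: "\<bar>g1u\<bar> \<le> 1"
    and u: "0 < u" "u < 1" and w: "0 \<le> w" "w \<le> 1"
    and far: "w < u / 2 \<or> 1 - w < (1 - u) / 2"
  shows "\<bar>g w - g u - g1u * (w - u)\<bar> \<le> 4 * (w - u)\<^sup>2 / (u * (1 - u))"
proof -
  define h where "h = u * (1 - u)"
  have h0: "0 < h" using u by (simp add: h_def)
  have "h \<le> u" "h \<le> 1 - u"
    using u by (simp_all add: h_def mult_left_le mult_left_le_one_le)
  then have "h \<le> 2 * \<bar>w - u\<bar>"
    using far by (auto simp: abs_if)
  moreover have "\<bar>g w - g u\<bar> \<le> \<bar>w - u\<bar>"
    using lipschitz_onD[OF lip, of w u] u w by (simp add: dist_real_def)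
  moreover have "\<bar>g1u * (w - u)\<bar> \<le> \<bar>w - u\<bar>"
    using mult_right_mono[OF g1u abs_ge_zero] by (simp add: abs_mult)
  ultimately have "h * \<bar>g w - g u - g1u * (w - u)\<bar> \<le> 2 * \<bar>w - u\<bar> * (2 * \<bar>w - u\<bar>)"
    using abs_triangle_ineq4[of "g w - g u" "g1u * (w - u)"]
    by (intro mult_mono) auto
  also have "\<dots> = 4 * (w - u)\<^sup>2"
    by (simp add: power2_eq_square abs_mult_self_eq)
  finally show ?thesis
    using h0 by (simp add: h_def[symmetric] pos_le_divide_eq mult.commute)
qed

lemma taylor_remainder_near:
  fixes g g1 g2 :: "real \<Rightarrow> real"
  assumes d1: "\<And>t. 0 < t \<Longrightarrow> t < 1 \<Longrightarrow> DERIV g t :> g1 t"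
    and d2: "\<And>t. 0 < t \<Longrightarrow> t < 1 \<Longrightarrow> DERIV g1 t :> g2 t"
    and b2: "\<And>t. 0 < t \<Longrightarrow> t < 1 \<Longrightarrow> \<bar>g2 t\<bar> \<le> K / (t * (1 - t))"
    and K: "0 \<le> K" and u: "0 < u" "u < 1"
    and near: "u / 2 \<le> w" "(1 - u) / 2 \<le> 1 - w"
  shows "\<bar>g w - g u - g1 u * (w - u)\<bar> \<le> 2 * K * (w - u)\<^sup>2 / (u * (1 - u))"
proof (cases "w = u")
  case False
  define D :: "nat \<Rightarrow> real \<Rightarrow> real" where "D m = (if m = 0 then g else if m = 1 then g1 else g2)" for m
  have between: "0 < t \<and> t < 1 \<and> u * (1 - u) / 4 \<le> t * (1 - t)"
    if "min u w \<le> t" "t \<le> max u w" for t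
  proof -
    have "u / 2 \<le> t" "(1 - u) / 2 \<le> 1 - t" using that near u by (auto simp: min_def max_def split: if_splits)
    moreover from this have "(u / 2) * ((1 - u) / 2) \<le> t * (1 - t)"
      using u by (intro mult_mono) auto
    ultimately show ?thesis using u by auto
  qed
  have "\<forall>m t. m < 2 \<and> min u w \<le> t \<and> t \<le> max u w \<longrightarrow> DERIV (D m) t :> D (Suc m) t"
    using between d1 d2 by (auto simp: D_def less_2_cases_iff)
  then obtain t where t: "if w < u then w < t \<and> t < u else u < t \<and> t < w"
    and "g w = (\<Sum>m<2. D m u / fact m * (w - u) ^ m) + D 2 t / fact 2 * (w - u)\<^sup>2"
    using Taylor[of 2 D g "min u w" "max u w" u w] False by (auto simp: D_def)
  then have taylor: "g w = g u + g1 u * (w - u) + g2 t / 2 * (w - u)\<^sup>2"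
    by (simp add: D_def eval_nat_numeral)
  have t': "0 < t" "t < 1" "u * (1 - u) / 4 \<le> t * (1 - t)"
    using between[of t] t by (auto simp: min_def max_def split: if_splits)
  have "\<bar>g2 t\<bar> \<le> K / (t * (1 - t))"
    using b2 t' by simp
  also have "\<dots> \<le> K / (u * (1 - u) / 4)"
    using t' u by (intro divide_left_mono K) auto
  finally have "\<bar>g2 t\<bar> / 2 \<le> 2 * K / (u * (1 - u))"
    by (simp add: mult.commute)
  then have "\<bar>g2 t\<bar> / 2 * (w - u)\<^sup>2 \<le> 2 * K / (u * (1 - u)) * (w - u)\<^sup>2"
    by (rule mult_right_mono) simp
  then show ?thesis
    using taylor by (simp add: abs_mult)
qed (simp add: K)

lemma taylor_remainder_le:
  fixes g g1 g2 :: "real \<Rightarrow> real"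
  assumes lip: "1-lipschitz_on {0..1} g"
    and d1: "\<And>t. 0 < t \<Longrightarrow> t < 1 \<Longrightarrow> DERIV g t :> g1 t"
    and d2: "\<And>t. 0 < t \<Longrightarrow> t < 1 \<Longrightarrow> DERIV g1 t :> g2 t"
    and b2: "\<And>t. 0 < t \<Longrightarrow> t < 1 \<Longrightarrow> \<bar>g2 t\<bar> \<le> K / (t * (1 - t))"
    and K: "0 \<le> K" and u: "0 < u" "u < 1" and w: "0 \<le> w" "w \<le> 1"
  shows "\<bar>g w - g u - g1 u * (w - u)\<bar> \<le> (2 * K + 4) * (w - u)\<^sup>2 / (u * (1 - u))"
proof -
  have "1-lipschitz_on {0<..<1} g"
    by (rule lipschitz_on_subset[OF lip]) auto
  then have g1u: "\<bar>g1 u\<bar> \<le> 1"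
    using lipschitz_deriv_abs_le d1 u by auto
  have bounds: "4 * (w - u)\<^sup>2 / (u * (1 - u)) \<le> (2 * K + 4) * (w - u)\<^sup>2 / (u * (1 - u))"
       "2 * K * (w - u)\<^sup>2 / (u * (1 - u)) \<le> (2 * K + 4) * (w - u)\<^sup>2 / (u * (1 - u))"
    using K u by (intro divide_right_mono mult_right_mono; simp)+
  show ?thesis
  proof (cases "w < u / 2 \<or> 1 - w < (1 - u) / 2")
    case True
    then show ?thesis using taylor_remainder_far[OF lip g1u u w True] bounds(1) by linarith
  next
    case False
    then show ?thesis using taylor_remainder_near[OF d1 d2 b2 K u, of w] bounds(2) by linarith
  qed
qed

lemma binomial_pmf_p_0: "binomial_pmf n 0 = return_pmf 0"
  by (simp flip: set_pmf_subset_singleton)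

lemma binomial_pmf_p_1: "binomial_pmf n 1 = return_pmf n"
  by (simp flip: set_pmf_subset_singleton)

lemma bernstein_error_1d:
  fixes g g1 g2 :: "real \<Rightarrow> real"
  assumes lip: "1-lipschitz_on {0..1} g"
    and d1: "\<And>t. 0 < t \<Longrightarrow> t < 1 \<Longrightarrow> DERIV g t :> g1 t"
    and d2: "\<And>t. 0 < t \<Longrightarrow> t < 1 \<Longrightarrow> DERIV g1 t :> g2 t"
    and b2: "\<And>t. 0 < t \<Longrightarrow> t < 1 \<Longrightarrow> \<bar>g2 t\<bar> \<le> K / (t * (1 - t))"
    and K: "0 \<le> K" and u: "u \<in> {0..1}" and n: "n > 0"
  shows "\<bar>measure_pmf.expectation (binomial_pmf n u) (\<lambda>k. g (real k / real n)) - g u\<bar>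
           \<le> (2 * K + 4) / real n"
proof (cases "u \<in> {0, 1}")
  case True
  then show ?thesis
    using K n by (auto simp: binomial_pmf_p_0 binomial_pmf_p_1)
next
  case False
  then have u': "0 < u" "u < 1" using u by auto
  define h where "h = u * (1 - u)"
  have h0: "0 < h" using u' by (simp add: h_def)
  define R where "R w = g w - g u - g1 u * (w - u)" for w
  let ?E = "measure_pmf.expectation (binomial_pmf n u)"
  have "?E (\<lambda>k. g (real k / real n)) - g u = ?E (\<lambda>k. R (real k / real n))"
    using u n by (simp add: R_def expectation_binomial_pmf_real)
  also have "\<bar>\<dots>\<bar> \<le> ?E (\<lambda>k. \<bar>R (real k / real n)\<bar>)"
    using integral_norm_bound[of "binomial_pmf n u" "\<lambda>k. R (real k / real n)"] by simp
  also have "\<dots> \<le> ?E (\<lambda>k. (2 * K + 4) / h * (real k / real n - u)\<^sup>2)"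
  proof (rule integral_mono_AE)
    show "AE k in binomial_pmf n u.
            \<bar>R (real k / real n)\<bar> \<le> (2 * K + 4) / h * (real k / real n - u)\<^sup>2"
    proof (rule AE_pmfI)
      fix k assume "k \<in> set_pmf (binomial_pmf n u)"
      then have "k \<le> n" using u' by simp
      have "\<bar>R (real k / real n)\<bar> \<le> (2 * K + 4) * (real k / real n - u)\<^sup>2 / h"
        unfolding R_def h_def
        by (rule taylor_remainder_le[OF lip d1 d2 b2 K u']) (use n \<open>k \<le> n\<close> in \<open>auto simp: field_simps\<close>)
      then show "\<bar>R (real k / real n)\<bar> \<le> (2 * K + 4) / h * (real k / real n - u)\<^sup>2"
        by simp
    qed
  qed (use u in auto)
  also have "\<dots> = (2 * K + 4) / real n"
    using u u' n by (simp add: expectation_binomial_pmf_sq_dev h_def)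
  finally show ?thesis .
qed

subsection \<open>Sections of a copula\<close>

lemma vupd_nth [simp]: "vupd u j t $ i = (if i = j then t else u $ i)"
  by (simp add: vupd_def)

lemma vupd_vupd_same [simp]: "vupd (vupd u j s) j t = vupd u j t"
  by (simp add: vec_eq_iff)

lemma vupd_triv [simp]: "vupd u j (u $ j) = u"
  by (simp add: vec_eq_iff)

lemma vupd_commute: "j \<noteq> k \<Longrightarrow> vupd (vupd u j s) k t = vupd (vupd u k t) j s"
  by (simp add: vec_eq_iff)

lemma vupd_in_unit_cube: "u \<in> unit_cube \<Longrightarrow> t \<in> {0..1} \<Longrightarrow> vupd u j t \<in> unit_cube"
  by (simp add: unit_cube_def)

lemma copula_C_volume_eq_sum_Pow:
  fixes C :: "real^'d::finite \<Rightarrow> real"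
  assumes cop: "copula C" and a: "a \<in> unit_cube" and b: "b \<in> unit_cube"
    and a0: "\<And>i. i \<notin> J \<Longrightarrow> a $ i = 0"
  shows "C_volume C a b =
           (\<Sum>T\<in>Pow J. (-1) ^ card (J - T) * C (\<chi> i. if i \<in> T \<or> i \<notin> J then b$i else a$i))"
proof -
  let ?f = "\<lambda>S. (-1) ^ card (UNIV - S) * C (\<chi> i. if i \<in> S then b$i else a$i) :: real"
  have vanish: "?f S = 0" if S: "\<not> UNIV - J \<subseteq> S" for S
  proof -
    obtain i where "i \<notin> J" "i \<notin> S" using S by blast
    then have "(\<chi> i. if i \<in> S then b$i else a$i) $ i = 0" using a0 by simp
    moreover have "(\<chi> i. if i \<in> S then b$i else a$i) \<in> unit_cube"
      using a b by (auto simp: unit_cube_def)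
    ultimately have "C (\<chi> i. if i \<in> S then b$i else a$i) = 0"
      using cop unfolding copula_def by blast
    then show ?thesis by simp
  qed
  have "C_volume C a b = (\<Sum>S\<in>{S. UNIV - J \<subseteq> S}. ?f S)"
    unfolding C_volume_def by (rule sum.mono_neutral_right) (use vanish in auto)
  also have "\<dots> = (\<Sum>T\<in>Pow J. ?f (T \<union> (UNIV - J)))"
    by (rule sum.reindex_bij_betw[symmetric], rule bij_betw_byWitness[where f' = "\<lambda>S. S \<inter> J"]) auto
  also have "\<dots> = (\<Sum>T\<in>Pow J. (-1) ^ card (J - T) * C (\<chi> i. if i \<in> T \<or> i \<notin> J then b$i else a$i))"
  proof (intro sum.cong refl)
    fix T assume "T \<in> Pow J"
    then have "UNIV - (T \<union> (UNIV - J)) = J - T" by auto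
    then show "?f (T \<union> (UNIV - J)) = (-1) ^ card (J - T) * C (\<chi> i. if i \<in> T \<or> i \<notin> J then b$i else a$i)"
      by simp
  qed
  finally show ?thesis .
qed

lemma copula_mono_coord:
  fixes C :: "real^'d::finite \<Rightarrow> real"
  assumes cop: "copula C" and z: "z \<in> unit_cube" and st: "0 \<le> s" "s \<le> t" "t \<le> 1"
  shows "C (vupd z j s) \<le> C (vupd z j t)"
proof -
  define a :: "real^'d" where "a = (\<chi> i. if i = j then s else 0)"
  define b where "b = vupd z j t"
  have ac: "a \<in> unit_cube" using st by (simp add: unit_cube_def a_def)
  have bc: "b \<in> unit_cube" using z st by (simp add: b_def vupd_in_unit_cube)
  have "0 \<le> C_volume C a b"
    using cop ac bc z st unfolding copula_def by (auto simp: a_def b_def unit_cube_def)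
  also have "C_volume C a b =
      (\<Sum>T\<in>Pow {j}. (-1) ^ card ({j} - T) * C (\<chi> i. if i \<in> T \<or> i \<notin> {j} then b$i else a$i))"
    by (rule copula_C_volume_eq_sum_Pow[OF cop ac bc]) (simp add: a_def)
  also have "\<dots> = C b - C (vupd z j s)"
  proof -
    have "Pow {j} = {{}, {j}}" by blast
    moreover have "(\<chi> i. if i \<noteq> j then b$i else a$i) = vupd z j s"
      by (simp add: vec_eq_iff a_def b_def)
    ultimately show ?thesis by simp
  qed
  finally show ?thesis by (simp add: b_def)
qed

lemma copula_2_increasing_coords:
  fixes C :: "real^'d::finite \<Rightarrow> real"
  assumes cop: "copula C" and z: "z \<in> unit_cube" and jk: "j \<noteq> k"
    and st1: "0 \<le> s1" "s1 \<le> t1" "t1 \<le> 1" and st2: "0 \<le> s2" "s2 \<le> t2" "t2 \<le> 1"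
  shows "C (vupd (vupd z j s1) k t2) + C (vupd (vupd z j t1) k s2)
       \<le> C (vupd (vupd z j t1) k t2) + C (vupd (vupd z j s1) k s2)"
proof -
  define a :: "real^'d" where "a = (\<chi> i. if i = j then s1 else if i = k then s2 else 0)"
  define b where "b = vupd (vupd z j t1) k t2"
  have ac: "a \<in> unit_cube" using st1 st2 by (simp add: unit_cube_def a_def)
  have bc: "b \<in> unit_cube" using z st1 st2 by (simp add: b_def vupd_in_unit_cube)
  have "0 \<le> C_volume C a b"
    using cop ac bc z st1 st2 jk unfolding copula_def by (auto simp: a_def b_def unit_cube_def)
  also have "C_volume C a b =
      (\<Sum>T\<in>Pow {j,k}. (-1) ^ card ({j,k} - T) * C (\<chi> i. if i \<in> T \<or> i \<notin> {j,k} then b$i else a$i))"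
    by (rule copula_C_volume_eq_sum_Pow[OF cop ac bc]) (simp add: a_def)
  also have "\<dots> = C (vupd (vupd z j t1) k t2) - C (vupd (vupd z j s1) k t2)
       - C (vupd (vupd z j t1) k s2) + C (vupd (vupd z j s1) k s2)"
  proof -
    have "Pow {j,k} = {{}, {j}, {k}, {j,k}}" by blast
    moreover have "card ({j,k} - {}) = 2" "card ({j,k} - {j}) = 1" "card ({j,k} - {k}) = 1"
      using jk by (auto simp: insert_Diff_if)
    moreover have "(\<chi> i. if i \<in> {} \<or> i \<notin> {j,k} then b$i else a$i) = vupd (vupd z j s1) k s2"
      "(\<chi> i. if i \<in> {j} \<or> i \<notin> {j,k} then b$i else a$i) = vupd (vupd z j t1) k s2"
      "(\<chi> i. if i \<in> {k} \<or> i \<notin> {j,k} then b$i else a$i) = vupd (vupd z j s1) k t2"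
      "(\<chi> i. if i \<in> {j,k} \<or> i \<notin> {j,k} then b$i else a$i) = b"
      using jk by (auto simp: vec_eq_iff a_def b_def)
    ultimately show ?thesis
      using jk by (simp add: b_def)
  qed
  finally show ?thesis by simp
qed

lemma copula_increment_le:
  fixes C :: "real^'d::finite \<Rightarrow> real"
  assumes cop: "copula C" and z: "z \<in> unit_cube" and st: "0 \<le> s" "s \<le> t" "t \<le> 1"
  shows "C (vupd z j t) - C (vupd z j s) \<le> t - s"
proof -
  define D where "D w = C (vupd w j t) - C (vupd w j s)" for w
  define ones where "ones A = (\<chi> i. if i \<in> A then 1 else z$i)" for A
  have ones_cube: "ones A \<in> unit_cube" for A
    using z by (simp add: ones_def unit_cube_def)
  \<comment> \<open>by 2-increasingness, raising another coordinate to 1 can only enlarge the increment\<close>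
  have "D z \<le> D (ones A)" if "finite A" "j \<notin> A" for A
    using that
  proof (induction A rule: finite_induct)
    case empty
    then show ?case by (simp add: ones_def)
  next
    case (insert k A)
    let ?w = "ones A"
    have jk: "j \<noteq> k" using insert by auto
    have wk: "0 \<le> ?w $ k" "?w $ k \<le> 1" using ones_cube[of A] by (auto simp: unit_cube_def)
    have "ones (insert k A) = vupd ?w k 1" by (simp add: vec_eq_iff ones_def)
    moreover have "vupd (vupd ?w j r) k (?w $ k) = vupd ?w j r" for r
      using jk by (simp add: vec_eq_iff)
    then have "D ?w \<le> D (vupd ?w k 1)"
      using copula_2_increasing_coords[OF cop ones_cube[of A] jk st wk order_refl] jk
      by (simp add: D_def vupd_commute)
    ultimately show ?case using insert by simp
  qed
  then have "D z \<le> D (ones (UNIV - {j}))" by simp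
  also have "D (ones (UNIV - {j})) = t - s"
  proof -
    have "C (vupd (ones (UNIV - {j})) j r) = r" if "r \<in> {0..1}" for r
    proof -
      have "\<forall>i. i \<noteq> j \<longrightarrow> vupd (ones (UNIV - {j})) j r $ i = 1"
        by (simp add: ones_def)
      moreover have "\<And>v. v \<in> unit_cube \<Longrightarrow> (\<forall>i. i \<noteq> j \<longrightarrow> v$i = 1) \<Longrightarrow> C v = v$j"
        using cop unfolding copula_def by blast
      ultimately show ?thesis
        using vupd_in_unit_cube[OF ones_cube that] by simp
    qed
    then show ?thesis using st by (simp add: D_def)
  qed
  finally show ?thesis by (simp add: D_def)
qed

lemma copula_lipschitz_coord:
  fixes C :: "real^'d::finite \<Rightarrow> real"
  assumes cop: "copula C" and z: "z \<in> unit_cube"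
  shows "1-lipschitz_on {0..1} (\<lambda>t. C (vupd z j t))"
proof (rule lipschitz_onI)
  have ordered: "dist (C (vupd z j s)) (C (vupd z j t)) \<le> dist s t"
    if "0 \<le> s" "s \<le> t" "t \<le> 1" for s t
    using copula_increment_le[OF cop z that] copula_mono_coord[OF cop z that] that
    by (simp add: dist_real_def abs_of_nonpos)
  show "dist (C (vupd z j s)) (C (vupd z j t)) \<le> 1 * dist s t" if "s \<in> {0..1}" "t \<in> {0..1}" for s t
    using that ordered[of s t] ordered[of t s] by (cases "s \<le> t") (auto simp: dist_commute)
qed simp

subsection \<open>Iterated expectations over product distributions\<close>

lemma finite_set_Pi_pmf:
  assumes "finite A" "\<And>j. j \<in> A \<Longrightarrow> finite (set_pmf (p j))"
  shows "finite (set_pmf (Pi_pmf A dflt p))"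
  using assms by (simp add: set_Pi_pmf finite_PiE_dflt)

lemma expectation_pair_pmf_iterated:
  fixes F :: "'a \<times> 'b \<Rightarrow> real"
  assumes fp: "finite (set_pmf p)" and fq: "finite (set_pmf q)"
  shows "measure_pmf.expectation (pair_pmf p q) F =
         measure_pmf.expectation q (\<lambda>b. measure_pmf.expectation p (\<lambda>a. F (a, b)))"
proof -
  have "measure_pmf.expectation (pair_pmf p q) F =
        (\<Sum>z\<in>set_pmf p \<times> set_pmf q. F z * pmf (pair_pmf p q) z)"
    by (rule integral_measure_pmf_real) (use fp fq in auto)
  also have "\<dots> = (\<Sum>a\<in>set_pmf p. \<Sum>b\<in>set_pmf q. F (a, b) * (pmf p a * pmf q b))"
    by (subst sum.cartesian_product) (auto intro!: sum.cong simp: pmf_pair)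
  also have "\<dots> = (\<Sum>b\<in>set_pmf q. (\<Sum>a\<in>set_pmf p. F (a, b) * pmf p a) * pmf q b)"
    by (subst sum.swap) (simp add: sum_distrib_right sum_distrib_left mult_ac)
  also have "\<dots> = (\<Sum>b\<in>set_pmf q. measure_pmf.expectation p (\<lambda>a. F (a, b)) * pmf q b)"
    by (intro sum.cong refl arg_cong2[where f = "(*)"] integral_measure_pmf_real[symmetric])
       (use fp in auto)
  also have "\<dots> = measure_pmf.expectation q (\<lambda>b. measure_pmf.expectation p (\<lambda>a. F (a, b)))"
    by (rule integral_measure_pmf_real[symmetric]) (use fq in auto)
  finally show ?thesis .
qed

lemma expectation_Pi_pmf_insert:
  fixes F :: "('a \<Rightarrow> 'b) \<Rightarrow> real"
  assumes A: "finite A" "x \<notin> A" and fin: "\<And>j. finite (set_pmf (p j))"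
  shows "measure_pmf.expectation (Pi_pmf (insert x A) dflt p) F =
         measure_pmf.expectation (Pi_pmf A dflt p) (\<lambda>f. measure_pmf.expectation (p x) (\<lambda>y. F (f(x := y))))"
  unfolding Pi_pmf_insert[OF A]
  by (simp add: split_def expectation_pair_pmf_iterated[OF fin finite_set_Pi_pmf[OF A(1) fin]])

subsection \<open>Telescoping over the coordinates\<close>

lemma bernstein_error_coord:
  fixes C :: "real^'d::finite \<Rightarrow> real"
  assumes cop: "copula C"
    and d1: "\<forall>u\<in>V x. partial_exists x C u"
    and d2: "\<forall>u\<in>V x. partial_exists x (partial x C) u"
    and b2: "\<forall>u\<in>V x. \<bar>partial x (partial x C) u\<bar> \<le> K / (u$x * (1 - u$x))"
    and K: "0 \<le> K" and z: "z \<in> unit_cube" and n: "n > 0"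
  shows "\<bar>measure_pmf.expectation (binomial_pmf n (z$x)) (\<lambda>k. C (vupd z x (real k / real n))) - C z\<bar>
           \<le> (2 * K + 4) / real n"
proof -
  have inV: "vupd z x t \<in> V x" if "0 < t" "t < 1" for t
    using that z by (simp add: V_def vupd_in_unit_cube)
  have D1: "DERIV (\<lambda>t. C (vupd z x t)) t :> partial x C (vupd z x t)" if "0 < t" "t < 1" for t
  proof -
    have "partial_exists x C (vupd z x t)" using d1 inV[OF that] by blast
    then show ?thesis by (simp add: partial_def partial_exists_def DERIV_deriv_iff_real_differentiable)
  qed
  have D2: "DERIV (\<lambda>t. partial x C (vupd z x t)) t :> partial x (partial x C) (vupd z x t)"
    if "0 < t" "t < 1" for t
  proof -
    have "partial_exists x (partial x C) (vupd z x t)" using d2 inV[OF that] by blast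
    then show ?thesis
      by (simp add: partial_def[of x "partial x C"] partial_exists_def DERIV_deriv_iff_real_differentiable)
  qed
  have B2: "\<bar>partial x (partial x C) (vupd z x t)\<bar> \<le> K / (t * (1 - t))" if "0 < t" "t < 1" for t
    using b2[rule_format, OF inV[OF that]] by simp
  have "z$x \<in> {0..1}" using z by (simp add: unit_cube_def)
  from bernstein_error_1d[OF copula_lipschitz_coord[OF cop z] D1 D2 B2 K this n]
  show ?thesis by simp
qed

definition grid_on :: "nat \<Rightarrow> 'd set \<Rightarrow> ('d \<Rightarrow> nat) \<Rightarrow> real^'d \<Rightarrow> real^'d" where
  "grid_on n B k u = (\<chi> i. if i \<in> B then real (k i) / real n else u $ i)"

lemma bernstein_error_telescope:
  fixes C :: "real^'d::finite \<Rightarrow> real"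
  assumes coord: "\<And>z x. z \<in> unit_cube \<Longrightarrow>
      \<bar>measure_pmf.expectation (binomial_pmf n (z$x)) (\<lambda>k. C (vupd z x (real k / real n))) - C z\<bar> \<le> M"
    and u: "u \<in> unit_cube" and n: "n > 0"
  shows "\<bar>measure_pmf.expectation (bin_vec_pmf n u) (\<lambda>k. C (grid_on n B k u)) - C u\<bar> \<le> real (card B) * M"
proof (induction B rule: infinite_finite_induct)
  case (infinite B)
  then show ?case by (simp add: grid_on_def)
next
  case empty
  then show ?case by (simp add: grid_on_def)
next
  case (insert x B)
  define p where "p = (\<lambda>j. binomial_pmf n (u$j))"
  let ?E = "measure_pmf.expectation (bin_vec_pmf n u)"
  let ?step = "\<lambda>k. C (grid_on n (insert x B) k u) - C (grid_on n B k u)"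
  have uj: "u$j \<in> {0..1}" for j using u by (simp add: unit_cube_def)
  then have fin: "finite (set_pmf (p j))" for j by (auto simp: p_def)
  have "\<bar>?E ?step\<bar> \<le> M"
  proof -
    let ?Q = "Pi_pmf (UNIV - {x}) 0 p"
    let ?inner = "\<lambda>f. measure_pmf.expectation (p x) (\<lambda>y. ?step (f(x := y)))"
    have "bin_vec_pmf n u = Pi_pmf (insert x (UNIV - {x})) 0 p"
      by (simp add: bin_vec_pmf_def p_def insert_UNIV)
    then have "?E ?step = measure_pmf.expectation ?Q ?inner"
      using expectation_Pi_pmf_insert[of "UNIV - {x}" x p 0 ?step] fin by simp
    also have "\<bar>\<dots>\<bar> \<le> measure_pmf.expectation ?Q (\<lambda>f. \<bar>?inner f\<bar>)"
      using integral_norm_bound[of ?Q ?inner] by simp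
    also have "\<dots> \<le> M"
    proof (rule measure_pmf.integral_le_const)
      show "integrable ?Q (\<lambda>f. \<bar>?inner f\<bar>)"
        by (rule integrable_measure_pmf_finite, rule finite_set_Pi_pmf) (use fin in auto)
      show "AE f in ?Q. \<bar>?inner f\<bar> \<le> M"
      proof (rule AE_pmfI)
        fix f assume "f \<in> set_pmf ?Q"
        then have "f j \<le> n" for j
          using uj by (cases "j = x") (auto simp: set_Pi_pmf PiE_dflt_def p_def set_pmf_binomial_eq
              split: if_splits)
        then have z: "grid_on n B f u \<in> unit_cube"
          using u n by (auto simp: grid_on_def unit_cube_def divide_le_eq_1)
        have "grid_on n B (f(x := y)) u = grid_on n B f u"
          "grid_on n (insert x B) (f(x := y)) u = vupd (grid_on n B f u) x (real y / real n)" for y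
          using insert by (auto simp: grid_on_def vec_eq_iff)
        moreover have "grid_on n B f u $ x = u $ x"
          using insert by (simp add: grid_on_def)
        ultimately have "?inner f = measure_pmf.expectation (binomial_pmf n (grid_on n B f u $ x))
              (\<lambda>k. C (vupd (grid_on n B f u) x (real k / real n))) - C (grid_on n B f u)"
          using uj by (simp add: p_def)
        then show "\<bar>?inner f\<bar> \<le> M" using coord[OF z] by simp
      qed
    qed
    finally show ?thesis .
  qed
  moreover have "?E (\<lambda>k. C (grid_on n (insert x B) k u)) - C u = ?E ?step + (?E (\<lambda>k. C (grid_on n B k u)) - C u)"
    using finite_set_Pi_pmf[of UNIV p 0] fin
    by (simp add: bin_vec_pmf_def p_def integrable_measure_pmf_finite)
  ultimately show ?case
    using insert by (simp add: algebra_simps)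
qed

lemma abs_bernstein_err_le:
  fixes C :: "real^'d::finite \<Rightarrow> real"
  assumes coord: "\<And>z x. z \<in> unit_cube \<Longrightarrow>
      \<bar>measure_pmf.expectation (binomial_pmf n (z$x)) (\<lambda>k. C (vupd z x (real k / real n))) - C z\<bar> \<le> M"
    and u: "u \<in> unit_cube" and n: "n > 0"
  shows "\<bar>bernstein_err C n u\<bar> \<le> real CARD('d) * M"
proof -
  have "finite (set_pmf (bin_vec_pmf n u))"
    unfolding bin_vec_pmf_def
    by (rule finite_set_Pi_pmf) (use u in \<open>auto simp: unit_cube_def\<close>)
  then have "bernstein_err C n u = measure_pmf.expectation (bin_vec_pmf n u) (\<lambda>k. C (grid_on n UNIV k u)) - C u"
    by (simp add: bernstein_err_def grid_on_def integrable_measure_pmf_finite)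
  then show ?thesis
    using bernstein_error_telescope[OF coord u n, of UNIV] by simp
qed

lemma SUP_abs_in_bigo_inverse:
  fixes f :: "nat \<Rightarrow> 'a \<Rightarrow> real"
  assumes x0: "x0 \<in> S" and bound: "\<And>n x. n > 0 \<Longrightarrow> x \<in> S \<Longrightarrow> \<bar>f n x\<bar> \<le> M / real n"
  shows "(\<lambda>n. SUP x\<in>S. \<bar>f n x\<bar>) \<in> O(\<lambda>n. 1 / real n)"
proof (rule bigoI[where c = M], rule eventually_at_top_linorderI[of 1])
  fix n :: nat assume "n \<ge> 1"
  then have bound_n: "\<bar>f n x\<bar> \<le> M / real n" if "x \<in> S" for x
    using bound that by simp
  have "(SUP x\<in>S. \<bar>f n x\<bar>) \<le> M / real n"
    using x0 bound_n by (intro cSUP_least) auto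
  moreover have "0 \<le> (SUP x\<in>S. \<bar>f n x\<bar>)"
    using x0 bound_n by (intro cSUP_upper2[OF bdd_aboveI2]) auto
  ultimately show "norm (SUP x\<in>S. \<bar>f n x\<bar>) \<le> M * norm (1 / real n)"
    by simp
qed

theorem lemma2:
  fixes C :: "real^'d::finite \<Rightarrow> real"
  assumes cop: "copula C"
    and d1: "\<And>j. \<forall>u\<in>V j. partial_exists j C u"
    and d1c: "\<And>j. continuous_on (V j) (partial j C)"
    and d2: "\<And>j1 j2. \<forall>u\<in>V j1 \<inter> V j2. partial_exists j2 (partial j1 C) u"
    and d2c: "\<And>j1 j2. continuous_on (V j1 \<inter> V j2) (partial j2 (partial j1 C))"
    and K: "\<exists>K>0. \<forall>j1 j2. \<forall>u\<in>V j1 \<inter> V j2.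
              \<bar>partial j2 (partial j1 C) u\<bar> \<le>
                K * min (1 / (u$j1 * (1 - u$j1))) (1 / (u$j2 * (1 - u$j2)))"
  shows "(\<lambda>n. SUP u\<in>unit_cube. \<bar>bernstein_err C n u\<bar>) \<in> O(\<lambda>n. ln (real n) / real n)"
proof -
  obtain K where K0: "K > 0" and Kb: "\<forall>j1 j2. \<forall>u\<in>V j1 \<inter> V j2.
      \<bar>partial j2 (partial j1 C) u\<bar> \<le> K * min (1 / (u$j1 * (1 - u$j1))) (1 / (u$j2 * (1 - u$j2)))"
    using K by blast
  have d2_diag: "\<forall>u\<in>V x. partial_exists x (partial x C) u" for x
    using d2[of x x] by simp
  have K_diag: "\<forall>u\<in>V x. \<bar>partial x (partial x C) u\<bar> \<le> K / (u$x * (1 - u$x))" for x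
    using Kb by (metis Int_absorb min.idem times_divide_eq_right mult_1_right)
  have "(\<chi> i. 0) \<in> (unit_cube :: (real^'d) set)"
    by (simp add: unit_cube_def)
  moreover have "\<bar>bernstein_err C n u\<bar> \<le> real CARD('d) * (2 * K + 4) / real n"
    if "n > 0" "u \<in> unit_cube" for n u
    using abs_bernstein_err_le[OF bernstein_error_coord[OF cop d1 d2_diag K_diag _ _ that(1)] that(2,1)] K0
    by simp
  ultimately have "(\<lambda>n. SUP u\<in>unit_cube. \<bar>bernstein_err C n u\<bar>) \<in> O(\<lambda>n. 1 / real n)"
    by (intro SUP_abs_in_bigo_inverse) blast+
  also have "(\<lambda>n. 1 / real n) \<in> O(\<lambda>n. ln (real n) / real n)"
    by real_asymp
  finally show ?thesis .
qed

end
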